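(* Let $f=(f_{\{i,j\}})_{j\ge i\ge-1}$ be any element of the $\mathrm{fin}_2(\mathbb{N})$-simplex, let $X_1,X_2,\dots$ be i.i.d. with $\mathrm{pr}(X_k=\{i,j\}\mid f)=f_{\{i,j\}}$, and let $\mathcal{Y}=\mathcal{E}_{\mathcal{X}}$ be the edge-labeled network induced by the selection function $\mathcal{X}:\mathbb{N}\to\mathrm{fin}_2(\mathbb{Z})$ constructed from $X_1,X_2,\dots$. Then $\mathcal{Y}$ is edge exchangeable.
   Context: $\mathrm{fin}_2(\mathcal{P})$ is the set of size-2 multisets $\{i,j\}$ of $\mathcal{P}$ (undirected edges, loops allowed). An interaction process $\mathcal{I}:S\to\mathrm{fin}_2(\mathcal{P})$ ($S\subseteq\mathbb{N}$) induces the edge-labeled network $\mathcal{E}_{\mathcal{I}}$, the equivalence class of $\mathcal{I}$ under relabeling vertices by bijections of the population, keeping edge labels in $S$. For a permutation $\sigma$ of $S$, $\mathcal{E}^\sigma$ is induced by $\mathcal{I}^\sigma(i)=\mathcal{I}(\sigma^{-1}(i))$; a random edge-labeled network $\mathcal{Y}$ is edge exchangeable if $\mathcal{Y}^\sigma$ has the same law as $\mathcal{Y}$ for all permutations $\sigma$ of $S$. The $\mathrm{fin}_2(\mathbb{N})$-simplex is the set of $(f_{\{i,j\}})_{j\ge i\ge-1}$ (indices in $\{-1,0,1,2,\dots\}$) with $f_{\{i,j\}}\ge0$, $f_{\{-1,i\}}=0$ for all $i\ne0$, and $\sum_{j\ge i\ge-1}f_{\{i,j\}}=1$. Construction of $\mathcal{X}$: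 set $m_0=0$. For $n\ge1$ with $m_{n-1}=z\le0$: if $X_n$ contains neither $0$ nor $-1$, put $\mathcal{X}(n)=X_n$, $m_n=z$; if $X_n=\{0,j\}$ with $j\ge1$, put $\mathcal{X}(n)=\{z-1,j\}$, $m_n=z-1$; if $X_n=\{0,0\}$, put $\mathcal{X}(n)=\{z-1,z-1\}$, $m_n=z-1$; if $X_n=\{-1,0\}$, put $\mathcal{X}(n)=\{z-1,z-2\}$, $m_n=z-2$. (Thus events involving $0$ or $-1$ create fresh vertices that never reappear.) *)

theory Defs
  imports "HOL-Probability.Probability" "HOL-Library.Uprod"
begin

text \<open>Size-2 multisets of integers are represented by the library type int uprod
  (unordered pairs, loops allowed).  Index -1 and 0 are the special indices.\<close>

definition fin2_simplex :: "(int uprod \<Rightarrow> real) set" where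
  "fin2_simplex = {f.
      (\<forall>e. f e \<ge> 0)
    \<and> (\<forall>e. f e \<noteq> 0 \<longrightarrow> (\<forall>x\<in>set_uprod e. x \<ge> -1))
    \<and> (\<forall>i. i \<noteq> 0 \<longrightarrow> f (Upair (-1) i) = 0)
    \<and> (f has_sum 1) UNIV}"

text \<open>One step of the construction: given the current value z = m_(n-1) and the
  draw X_n, return (script X(n), m_n).\<close>

definition constr_step :: "int \<Rightarrow> int uprod \<Rightarrow> int uprod \<times> int" where
  "constr_step z x =
     (if 0 \<notin> set_uprod x \<and> -1 \<notin> set_uprod x then (x, z)
      else if x = Upair (-1) 0 then (Upair (z - 1) (z - 2), z - 2)
      else if x = Upair 0 0 then (Upair (z - 1) (z - 1), z - 1)
      else if (\<exists>j. j \<ge> 1 \<and> x = Upair 0 j)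
        then (Upair (z - 1) (THE j. j \<ge> 1 \<and> x = Upair 0 j), z - 1)
      else (x, z))"  \<comment> \<open>last branch: probability-zero draws, irrelevant\<close>

text \<open>m-sequence: constr_m w n = m_n, where the stream w holds X_1, X_2, ...
  (w !! k = X_(k+1)).\<close>

primrec constr_m :: "int uprod stream \<Rightarrow> nat \<Rightarrow> int" where
  "constr_m w 0 = 0"
| "constr_m w (Suc n) = snd (constr_step (constr_m w n) (w !! n))"

text \<open>The selection function: constr_X w k = script X(k+1) (edge labels shifted to start at 0).\<close>

definition constr_X :: "int uprod stream \<Rightarrow> nat \<Rightarrow> int uprod" where
  "constr_X w k = fst (constr_step (constr_m w k) (w !! k))"

definition proc_space :: "(nat \<Rightarrow> int uprod) measure" where
  "proc_space = Pi\<^sub>M UNIV (\<lambda>_. count_space UNIV)"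

text \<open>A set of interaction processes is a union of edge-labeled networks iff it is
  invariant under relabeling vertices by bijections of the population.  Measurable
  invariant sets are exactly the preimages of measurable sets of the quotient
  (edge-labeled networks) under the quotient sigma-algebra.\<close>

definition relabel_invariant :: "(nat \<Rightarrow> int uprod) set \<Rightarrow> bool" where
  "relabel_invariant A \<longleftrightarrow>
     (\<forall>\<phi> :: int \<Rightarrow> int. bij \<phi> \<longrightarrow> (\<forall>I. I \<in> A \<longleftrightarrow> (map_uprod \<phi> \<circ> I) \<in> A))"

definition edge_exchangeable ::
    "'w measure \<Rightarrow> ('w \<Rightarrow> nat \<Rightarrow> int uprod) \<Rightarrow> bool" where
  "edge_exchangeable M Y \<longleftrightarrow>
     (\<forall>\<sigma> :: nat \<Rightarrow> nat. bij \<sigma> \<longrightarrow>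
        (\<forall>A \<in> sets proc_space. relabel_invariant A \<longrightarrow>
           emeasure (distr M proc_space (\<lambda>w. Y w \<circ> inv \<sigma>)) A
             = emeasure (distr M proc_space Y) A))"

end

theory Submission
  imports Defs
begin

text \<open>The draws X_1, X_2, ... are i.i.d., so permuting them does not change their joint law.
  On the other hand, running the construction on the permuted draws produces, up to a
  renaming of the fresh negative vertices, the permuted selection function: the n-th draw
  owns the fresh labels m_n - 1, ..., m_n - c for its count c of fresh vertices, permuting
  the draws permutes these (draw, slot) pairs, and the set of all fresh labels is the same
  for both orders since it only depends on the total number of fresh vertices.  Hence, for
  almost every outcome, the permuted network and the original one are relabelings of each
  other, and relabeling-invariant events have equal probability.\<close>

definition fresh_count :: "int uprod \<Rightarrow> int" where
  "fresh_count x =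
     (if 0 \<notin> set_uprod x \<and> -1 \<notin> set_uprod x then 0
      else if x = Upair (-1) 0 then 2
      else if x = Upair 0 0 then 1
      else if \<exists>j. j \<ge> 1 \<and> x = Upair 0 j then 1
      else 0)"

lemma fresh_count_nonneg: "fresh_count x \<ge> 0"
  by (simp add: fresh_count_def)

lemma snd_constr_step: "snd (constr_step z x) = z - fresh_count x"
  unfolding constr_step_def fresh_count_def by auto

lemma constr_m_Suc: "constr_m w (Suc n) = constr_m w n - fresh_count (w !! n)"
  by (simp add: snd_constr_step)

declare constr_m.simps(2) [simp del]

lemma constr_m_eq_neg_sum: "constr_m w n = - (\<Sum>k<n. fresh_count (w !! k))"
  by (induction n) (simp_all add: constr_m_Suc)

lemma constr_m_antimono: "n \<le> n' \<Longrightarrow> constr_m w n' \<le> constr_m w n"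
proof (induction n' rule: dec_induct)
  case (step k)
  then show ?case
    using fresh_count_nonneg[of "w !! k"] by (simp add: constr_m_Suc)
qed simp

text \<open>Draws such as {0, -2}, which have probability zero, fall into the last branch of
  constr_step and would clash with the fresh labels.\<close>

definition admissible_draw :: "int uprod \<Rightarrow> bool" where
  "admissible_draw x \<longleftrightarrow>
     (\<forall>y\<in>set_uprod x. y \<ge> 1) \<or> x = Upair (-1) 0 \<or> x = Upair 0 0
     \<or> (\<exists>j. j \<ge> 1 \<and> x = Upair 0 j)"

lemma admissible_draw_of_simplex:
  assumes f: "pmf p \<in> fin2_simplex" and x: "x \<in> set_pmf p"
  shows "admissible_draw x"
proof -
  obtain a b where ab: "x = Upair a b" by (cases x)
  have "a \<ge> -1" "b \<ge> -1"
    using f x ab by (auto simp: fin2_simplex_def set_pmf_iff)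
  moreover have "a = -1 \<Longrightarrow> b = 0" "b = -1 \<Longrightarrow> a = 0"
    using f x ab Upair_inject[of a "-1" "-1" a]
    by (auto simp: fin2_simplex_def set_pmf_iff simp del: Upair_inject)
  ultimately consider "a = -1" "b = 0" | "a = 0" "b = -1" | "a = 0" "b = 0"
    | "a = 0" "b \<ge> 1" | "a \<ge> 1" "b = 0" | "a \<ge> 1" "b \<ge> 1"
    by linarith
  then show ?thesis
    by cases (auto simp: admissible_draw_def ab)
qed

text \<open>A slot (n, s) stands for the s-th fresh vertex created by the draw w !! n; it receives
  the label m_n - s.\<close>

definition fresh_slots :: "int uprod stream \<Rightarrow> (nat \<times> int) set" where
  "fresh_slots w = {(n, s). 1 \<le> s \<and> s \<le> fresh_count (w !! n)}"

definition slot_label :: "int uprod stream \<Rightarrow> nat \<times> int \<Rightarrow> int" where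
  "slot_label w p = constr_m w (fst p) - snd p"

definition fresh_labels :: "int uprod stream \<Rightarrow> int set" where
  "fresh_labels w = {l. l < 0 \<and> (\<exists>n. constr_m w n \<le> l)}"

lemma inj_on_slot_label: "inj_on (slot_label w) (fresh_slots w)"
proof -
  have earlier: "slot_label w (n, s) \<noteq> slot_label w (n', s')"
    if "(n, s) \<in> fresh_slots w" "(n', s') \<in> fresh_slots w" "n < n'" for n s n' s'
  proof -
    have "constr_m w n' \<le> constr_m w (Suc n)"
      using constr_m_antimono \<open>n < n'\<close> by simp
    then show ?thesis
      using that by (simp add: fresh_slots_def slot_label_def constr_m_Suc)
  qed
  show ?thesis
  proof (rule inj_onI, clarify)
    fix n s n' s'
    assume "(n, s) \<in> fresh_slots w" "(n', s') \<in> fresh_slots w"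
      and eq: "slot_label w (n, s) = slot_label w (n', s')"
    then have "n = n'"
      using earlier by (metis linorder_neqE_nat)
    with eq show "n = n' \<and> s = s'"
      by (simp add: slot_label_def)
  qed
qed

lemma constr_m_crosses:
  "constr_m w N \<le> l \<Longrightarrow> l < 0 \<Longrightarrow> \<exists>n. l < constr_m w n \<and> constr_m w (Suc n) \<le> l"
proof (induction N)
  case (Suc N)
  then show ?case
    by (cases "constr_m w N \<le> l") (auto intro: exI[of _ N])
qed simp

lemma slot_label_image: "slot_label w ` fresh_slots w = fresh_labels w"
proof
  show "slot_label w ` fresh_slots w \<subseteq> fresh_labels w"
  proof clarify
    fix n s assume "(n, s) \<in> fresh_slots w"
    then show "slot_label w (n, s) \<in> fresh_labels w"
      using constr_m_antimono[of 0 n w]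
      by (auto simp: fresh_slots_def slot_label_def fresh_labels_def constr_m_Suc
               intro!: exI[of _ "Suc n"])
  qed
  show "fresh_labels w \<subseteq> slot_label w ` fresh_slots w"
  proof
    fix l assume "l \<in> fresh_labels w"
    then obtain N where "constr_m w N \<le> l" "l < 0"
      by (auto simp: fresh_labels_def)
    then obtain n where n: "l < constr_m w n" "constr_m w (Suc n) \<le> l"
      using constr_m_crosses by blast
    then have "(n, constr_m w n - l) \<in> fresh_slots w"
      by (auto simp: fresh_slots_def constr_m_Suc)
    moreover have "slot_label w (n, constr_m w n - l) = l"
      by (simp add: slot_label_def)
    ultimately show "l \<in> slot_label w ` fresh_slots w"
      by (metis image_eqI)
  qed
qed

lemma bij_betw_slot_label: "bij_betw (slot_label w) (fresh_slots w) (fresh_labels w)"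
  by (simp add: bij_betw_def inj_on_slot_label slot_label_image)

lemma fresh_labels_reindex_subset:
  assumes "inj \<tau>" "\<And>k. u !! k = v !! \<tau> k"
  shows "fresh_labels u \<subseteq> fresh_labels v"
proof
  fix l assume "l \<in> fresh_labels u"
  then obtain n where l: "l < 0" "constr_m u n \<le> l"
    by (auto simp: fresh_labels_def)
  obtain N where N: "\<forall>k\<in>\<tau> ` {..<n}. k < N"
    using finite_nat_bounded[of "\<tau> ` {..<n}"] by auto
  have "(\<Sum>k<n. fresh_count (u !! k)) = (\<Sum>k\<in>\<tau> ` {..<n}. fresh_count (v !! k))"
    using assms by (simp add: sum.reindex inj_on_subset)
  also have "\<dots> \<le> (\<Sum>k<N. fresh_count (v !! k))"
    using N by (intro sum_mono2) (auto simp: fresh_count_nonneg)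
  finally have "constr_m v N \<le> constr_m u n"
    by (simp add: constr_m_eq_neg_sum)
  with l show "l \<in> fresh_labels v"
    by (auto simp: fresh_labels_def intro!: exI[of _ N])
qed

definition permute_stream :: "(nat \<Rightarrow> nat) \<Rightarrow> 'a stream \<Rightarrow> 'a stream" where
  "permute_stream \<sigma> w = to_stream (\<lambda>k. w !! inv \<sigma> k)"

lemma permute_stream_snth: "permute_stream \<sigma> w !! k = w !! inv \<sigma> k"
  by (simp add: permute_stream_def to_stream_def)

lemma permute_stream_snth_apply: "bij \<sigma> \<Longrightarrow> permute_stream \<sigma> w !! \<sigma> n = w !! n"
  by (simp add: permute_stream_snth bij_is_inj)

lemma fresh_labels_permute_stream:
  assumes "bij \<sigma>"
  shows "fresh_labels (permute_stream \<sigma> w) = fresh_labels w"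
  using fresh_labels_reindex_subset[of "inv \<sigma>" "permute_stream \<sigma> w" w]
    fresh_labels_reindex_subset[of \<sigma> w "permute_stream \<sigma> w"] assms
  by (auto simp: permute_stream_snth permute_stream_snth_apply bij_is_inj bij_imp_bij_inv)

lemma bij_betw_permute_slots:
  assumes "bij \<sigma>"
  shows "bij_betw (map_prod \<sigma> id) (fresh_slots w) (fresh_slots (permute_stream \<sigma> w))"
proof -
  have "bij_betw (map_prod \<sigma> id) (fresh_slots w) (map_prod \<sigma> id ` fresh_slots w)"
    using assms by (auto intro!: inj_onI simp: bij_betw_def bij_is_inj inj_eq)
  moreover have "map_prod \<sigma> id ` fresh_slots w = fresh_slots (permute_stream \<sigma> w)"
  proof (rule set_eqI, safe)
    fix k s assume "(k, s) \<in> fresh_slots (permute_stream \<sigma> w)"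
    then have "(inv \<sigma> k, s) \<in> fresh_slots w"
      by (simp add: fresh_slots_def permute_stream_snth)
    moreover have "map_prod \<sigma> id (inv \<sigma> k, s) = (k, s)"
      using assms by (simp add: bij_is_surj surj_f_inv_f)
    ultimately show "(k, s) \<in> map_prod \<sigma> id ` fresh_slots w"
      by (metis image_eqI)
  qed (use assms in \<open>auto simp: fresh_slots_def permute_stream_snth_apply\<close>)
  ultimately show ?thesis by simp
qed

lemma bij_transport:
  assumes "bij_betw f S F" "bij_betw g T F" "bij_betw h S T"
  obtains \<phi> where "bij \<phi>" "\<And>x. x \<notin> F \<Longrightarrow> \<phi> x = x" "\<And>p. p \<in> S \<Longrightarrow> \<phi> (f p) = g (h p)"
proof
  define \<psi> where "\<psi> = g \<circ> h \<circ> inv_into S f"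
  have \<psi>: "bij_betw \<psi> F F"
    unfolding \<psi>_def using assms
    by (metis bij_betw_inv_into bij_betw_trans)
  let ?\<phi> = "\<lambda>x. if x \<in> F then \<psi> x else x"
  have "bij_betw ?\<phi> (F \<union> - F) (F \<union> - F)"
    by (rule bij_betw_combine)
       (use \<psi> in \<open>auto simp: bij_betw_def inj_on_def intro: image_cong\<close>)
  then show "bij ?\<phi>" by simp
  show "\<And>x. x \<notin> F \<Longrightarrow> ?\<phi> x = x" by simp
  show "?\<phi> (f p) = g (h p)" if "p \<in> S" for p
    using that assms(1) by (auto simp: \<psi>_def bij_betw_def)
qed

lemma map_uprod_constr_step:
  assumes "admissible_draw x"
    and pos: "\<And>l. l > 0 \<Longrightarrow> \<phi> l = l"
    and fresh: "\<And>s. 1 \<le> s \<Longrightarrow> s \<le> fresh_count x \<Longrightarrow> \<phi> (z - s) = z' - s"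
  shows "map_uprod \<phi> (fst (constr_step z x)) = fst (constr_step z' x)"
  using assms(1) unfolding admissible_draw_def
proof (elim disjE exE conjE)
  assume old: "\<forall>y\<in>set_uprod x. y \<ge> 1"
  then have "map_uprod \<phi> x = map_uprod id x"
    using pos by (intro uprod.map_cong) auto
  moreover have "0 \<notin> set_uprod x \<and> -1 \<notin> set_uprod x"
    using old by force
  ultimately show ?thesis
    by (simp add: constr_step_def uprod.map_id)
next
  assume "x = Upair (-1) 0"
  then show ?thesis
    using fresh[of 1] fresh[of 2] by (simp add: constr_step_def fresh_count_def)
next
  assume "x = Upair 0 0"
  then show ?thesis
    using fresh[of 1] by (simp add: constr_step_def fresh_count_def)
next
  fix j assume j: "j \<ge> 1" "x = Upair 0 j"
  then have "(THE j'. j' \<ge> 1 \<and> x = Upair 0 j') = j"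
    by (intro the_equality) auto
  moreover have "fresh_count x = 1"
    using j by (auto simp: fresh_count_def)
  ultimately show ?thesis
    using j fresh[of 1] pos[of j] by (auto simp: constr_step_def)
qed

lemma constr_X_permute_stream:
  assumes "bij \<sigma>" and admissible: "\<forall>n. admissible_draw (w !! n)"
  shows "\<exists>\<phi>. bij \<phi> \<and> map_uprod \<phi> \<circ> (constr_X w \<circ> inv \<sigma>) = constr_X (permute_stream \<sigma> w)"
proof -
  let ?v = "permute_stream \<sigma> w"
  obtain \<phi> where "bij \<phi>"
    and outside: "\<And>l. l \<notin> fresh_labels w \<Longrightarrow> \<phi> l = l"
    and slots: "\<And>p. p \<in> fresh_slots w \<Longrightarrow> \<phi> (slot_label w p) = slot_label ?v (map_prod \<sigma> id p)"
    using bij_transport[OF bij_betw_slot_label _ bij_betw_permute_slots[OF assms(1)]]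
      bij_betw_slot_label[of ?v] fresh_labels_permute_stream[OF assms(1)]
    by metis
  have "map_uprod \<phi> (constr_X w n) = constr_X ?v (\<sigma> n)" for n
    unfolding constr_X_def permute_stream_snth_apply[OF assms(1)]
  proof (rule map_uprod_constr_step)
    show "admissible_draw (w !! n)" using admissible ..
    show "\<phi> l = l" if "l > 0" for l
      using that outside by (simp add: fresh_labels_def)
    show "\<phi> (constr_m w n - s) = constr_m ?v (\<sigma> n) - s"
      if "1 \<le> s" "s \<le> fresh_count (w !! n)" for s
      using that slots[of "(n, s)"] by (simp add: fresh_slots_def slot_label_def)
  qed
  then have "map_uprod \<phi> \<circ> (constr_X w \<circ> inv \<sigma>) = constr_X ?v"
    using assms(1) by (auto simp: bij_is_surj surj_f_inv_f)
  with \<open>bij \<phi>\<close> show ?thesis by blast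
qed

lemma measurable_permute_stream:
  "permute_stream \<sigma> \<in> measurable (stream_space M) (stream_space M)"
proof -
  have "(\<lambda>w k. w !! inv \<sigma> k) \<in> measurable (stream_space M) (\<Pi>\<^sub>M i\<in>(UNIV::nat set). M)"
    by (rule measurable_PiM_single') (auto simp: space_stream_space streams_iff_snth)
  then show ?thesis
    unfolding permute_stream_def by (rule measurable_compose[OF _ measurable_to_stream])
qed

lemma distr_permute_stream:
  assumes "bij \<sigma>" and "prob_space M"
  shows "distr (stream_space M) (stream_space M) (permute_stream \<sigma>) = stream_space M"
proof -
  let ?P = "\<Pi>\<^sub>M i\<in>(UNIV::nat set). M"
  let ?reindex = "\<lambda>\<omega>. \<lambda>n\<in>UNIV. \<omega> (inv \<sigma> n)"
  have reindex: "distr ?P ?P ?reindex = ?P"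
    using distr_PiM_reindex[of UNIV "\<lambda>_. M" "inv \<sigma>" UNIV] assms bij_is_inj bij_imp_bij_inv
    by auto
  have "distr (stream_space M) (stream_space M) (permute_stream \<sigma>)
      = distr (distr ?P (stream_space M) to_stream) (stream_space M) (permute_stream \<sigma>)"
    by (subst stream_space_eq_distr) (rule refl)
  also have "\<dots> = distr ?P (stream_space M) (permute_stream \<sigma> \<circ> to_stream)"
    by (rule distr_distr) (auto simp: measurable_permute_stream)
  also have "permute_stream \<sigma> \<circ> to_stream = to_stream \<circ> ?reindex"
    by (auto simp: permute_stream_def to_stream_def fun_eq_iff restrict_def)
  also have "distr ?P (stream_space M) \<dots> = distr (distr ?P ?P ?reindex) (stream_space M) to_stream"
    by (rule distr_distr[symmetric]) auto
  also have "\<dots> = stream_space M"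
    by (simp only: reindex stream_space_eq_distr[symmetric])
  finally show ?thesis .
qed

lemma measurable_proc_space:
  assumes "\<And>k. (\<lambda>w. F w k) \<in> measurable M (count_space UNIV)"
  shows "F \<in> measurable M proc_space"
proof -
  have "(\<lambda>w k. F w k) \<in> measurable M proc_space"
    unfolding proc_space_def by (rule measurable_PiM_single') (use assms in auto)
  then show ?thesis by simp
qed

lemma edge_exchangeable_stream_space:
  assumes "prob_space M"
    and Y: "\<And>k. (\<lambda>w. Y w k) \<in> measurable (stream_space M) (count_space UNIV)"
    and relabel: "\<And>\<sigma>. bij \<sigma> \<Longrightarrow> AE w in stream_space M.
       \<exists>\<phi>. bij \<phi> \<and> map_uprod \<phi> \<circ> (Y w \<circ> inv \<sigma>) = Y (permute_stream \<sigma> w)"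
  shows "edge_exchangeable (stream_space M) Y"
  unfolding edge_exchangeable_def
proof (intro allI impI ballI)
  fix \<sigma> :: "nat \<Rightarrow> nat" and A
  assume "bij \<sigma>" and A: "A \<in> sets proc_space" and "relabel_invariant A"
  let ?S = "stream_space M"
  have mY: "Y \<in> measurable ?S proc_space"
    using Y by (rule measurable_proc_space)
  have mY\<sigma>: "(\<lambda>w. Y w \<circ> inv \<sigma>) \<in> measurable ?S proc_space"
    using Y by (intro measurable_proc_space) simp
  have mYperm: "Y \<circ> permute_stream \<sigma> \<in> measurable ?S proc_space"
    by (rule measurable_comp[OF measurable_permute_stream mY])
  have "AE w in ?S. Y w \<circ> inv \<sigma> \<in> A \<longleftrightarrow> Y (permute_stream \<sigma> w) \<in> A"
    using relabel[OF \<open>bij \<sigma>\<close>]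
    by eventually_elim (use \<open>relabel_invariant A\<close> in \<open>metis relabel_invariant_def\<close>)
  then have "emeasure ?S ((\<lambda>w. Y w \<circ> inv \<sigma>) -` A \<inter> space ?S)
      = emeasure ?S ((Y \<circ> permute_stream \<sigma>) -` A \<inter> space ?S)"
    by (intro emeasure_eq_AE) (auto intro: measurable_sets[OF mY\<sigma> A] measurable_sets[OF mYperm A])
  then have "emeasure (distr ?S proc_space (\<lambda>w. Y w \<circ> inv \<sigma>)) A
      = emeasure (distr ?S proc_space (Y \<circ> permute_stream \<sigma>)) A"
    by (simp add: emeasure_distr[OF mY\<sigma> A] emeasure_distr[OF mYperm A])
  also have "distr ?S proc_space (Y \<circ> permute_stream \<sigma>)
      = distr (distr ?S ?S (permute_stream \<sigma>)) proc_space Y"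
    by (rule distr_distr[symmetric, OF mY measurable_permute_stream])
  also have "distr ?S ?S (permute_stream \<sigma>) = ?S"
    using \<open>bij \<sigma>\<close> assms(1) by (rule distr_permute_stream)
  finally show "emeasure (distr ?S proc_space (\<lambda>w. Y w \<circ> inv \<sigma>)) A
      = emeasure (distr ?S proc_space Y) A" .
qed

lemma measurable_constr_m:
  "(\<lambda>w. constr_m w n) \<in> measurable (stream_space (measure_pmf p)) (count_space UNIV)"
proof (induction n)
  case (Suc n)
  have "(\<lambda>w. (\<lambda>z w. snd (constr_step z (w !! n))) (constr_m w n) w)
      \<in> measurable (stream_space (measure_pmf p)) (count_space UNIV)"
    by (rule measurable_compose_countable'[OF _ Suc])
       (auto intro!: measurable_compose[OF measurable_snth])
  then show ?case by (simp add: constr_m.simps(2))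
qed simp

lemma measurable_constr_X:
  "(\<lambda>w. constr_X w k) \<in> measurable (stream_space (measure_pmf p)) (count_space UNIV)"
proof -
  have "(\<lambda>w. (\<lambda>z w. fst (constr_step z (w !! k))) (constr_m w k) w)
      \<in> measurable (stream_space (measure_pmf p)) (count_space UNIV)"
    by (rule measurable_compose_countable'[OF _ measurable_constr_m])
       (auto intro!: measurable_compose[OF measurable_snth])
  then show ?thesis by (simp add: constr_X_def)
qed

theorem propositionA1:
  fixes p :: "int uprod pmf"
  assumes "pmf p \<in> fin2_simplex"
  shows "edge_exchangeable (stream_space (measure_pmf p)) constr_X"
proof (rule edge_exchangeable_stream_space[OF prob_space_measure_pmf measurable_constr_X])
  fix \<sigma> :: "nat \<Rightarrow> nat"
  assume "bij \<sigma>"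
  have "AE w in stream_space (measure_pmf p). stream_all admissible_draw w"
    by (rule prob_space.AE_stream_all[OF prob_space_measure_pmf])
       (auto intro: AE_pmfI admissible_draw_of_simplex[OF assms])
  then show "AE w in stream_space (measure_pmf p).
      \<exists>\<phi>. bij \<phi> \<and> map_uprod \<phi> \<circ> (constr_X w \<circ> inv \<sigma>) = constr_X (permute_stream \<sigma> w)"
    by eventually_elim (simp add: constr_X_permute_stream[OF \<open>bij \<sigma>\<close>] stream_all_def)
qed

end
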